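(* Let $R$ be a ring (associative with identity). Then the ring $B(R)$ of all $\omega\times\omega$ row-finite and column-finite matrices over $R$ is 2-clean.
   Context: A matrix indexed by $\mathbb{N}\times\mathbb{N}$ is row-finite (resp. column-finite) if each row (resp. column) has only finitely many nonzero entries; $B(R)$ is the ring of matrices that are both, under the usual matrix operations. For a positive integer $n$, a ring $S$ is called $n$-clean if every element of $S$ can be written as $e+u_1+\cdots+u_n$ with $e=e^2\in S$ and $u_1,\dots,u_n$ units of $S$. *)

theory Defs
  imports Main
begin

text \<open>Matrices indexed by nat x nat over a ring 'a (associative, with identity;
  the classes ring + monoid_mult allow also the zero ring).\<close>

type_synonym 'a imat = "nat \<Rightarrow> nat \<Rightarrow> 'a"

definition row_finite :: "('a::zero) imat \<Rightarrow> bool" where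
  "row_finite A \<longleftrightarrow> (\<forall>i. finite {j. A i j \<noteq> 0})"

definition column_finite :: "('a::zero) imat \<Rightarrow> bool" where
  "column_finite A \<longleftrightarrow> (\<forall>j. finite {i. A i j \<noteq> 0})"

definition B_mats :: "('a::zero) imat set" where
  "B_mats = {A. row_finite A \<and> column_finite A}"

definition mat_add :: "('a::plus) imat \<Rightarrow> 'a imat \<Rightarrow> 'a imat" where
  "mat_add A B = (\<lambda>i j. A i j + B i j)"

text \<open>Usual matrix product; the sum is finite since A is row-finite.\<close>
definition mat_mul :: "('a::{ring,monoid_mult}) imat \<Rightarrow> 'a imat \<Rightarrow> 'a imat" where
  "mat_mul A B = (\<lambda>i j. \<Sum>k\<in>{k. A i k \<noteq> 0}. A i k * B k j)"

definition mat_id :: "('a::{zero,one}) imat" where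
  "mat_id = (\<lambda>i j. if i = j then 1 else 0)"

definition B_idempotent :: "('a::{ring,monoid_mult}) imat \<Rightarrow> bool" where
  "B_idempotent E \<longleftrightarrow> E \<in> B_mats \<and> mat_mul E E = E"

definition B_unit :: "('a::{ring,monoid_mult}) imat \<Rightarrow> bool" where
  "B_unit U \<longleftrightarrow> U \<in> B_mats \<and>
     (\<exists>V \<in> B_mats. mat_mul U V = mat_id \<and> mat_mul V U = mat_id)"

end

theory Submission
  imports Defs
begin

(* The even/odd splitting of the indices exhibits B(R) as a 2 x 2 matrix ring over itself: the
   shift matrices e12 (ones at the positions (2k, 2k+1)) and e21 (ones at (2k+1, 2k)) satisfy
   e12^2 = e21^2 = 0 and e12 e21 + e21 e12 = 1, so they form a full set of 2 x 2 matrix units.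
   In any 2 x 2 matrix ring,
     [[a, b], [c, d]] = [[alpha, 1], [alpha - alpha^2, 1 - alpha]]
                        + [[0, 1], [1, y]] + [[1, s], [t, 1 + t s]]
   with alpha = a - 1, s = b - 2, t = c - 1 - alpha + alpha^2 and y = d - 2 + alpha - t s.
   The first summand is idempotent, the second has inverse [[-y, 1], [1, 0]], and the third is
   the product [[1, 0], [t, 1]] [[1, s], [0, 1]]. *)

definition invertible :: "'a::monoid_mult \<Rightarrow> bool" where
  "invertible u \<longleftrightarrow> (\<exists>v. u * v = 1 \<and> v * u = 1)"

locale matrix_units =
  fixes e12 e21 :: "'a::{ring,monoid_mult}"
  assumes e12_square: "e12 * e12 = 0"
    and e21_square: "e21 * e21 = 0"
    and e12_e21_plus_e21_e12: "e12 * e21 + e21 * e12 = 1"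
begin

lemma e12_e21_e12: "e12 * (e21 * e12) = e12" "e12 * (e21 * (e12 * w)) = e12 * w"
proof -
  have "e12 = e12 * (e12 * e21 + e21 * e12)" by (simp add: e12_e21_plus_e21_e12)
  also have "\<dots> = e12 * (e21 * e12)" by (simp add: distrib_left e12_square flip: mult.assoc)
  finally show "e12 * (e21 * e12) = e12" ..
  then show "e12 * (e21 * (e12 * w)) = e12 * w" by (metis mult.assoc)
qed

lemma e21_e12_e21: "e21 * (e12 * e21) = e21" "e21 * (e12 * (e21 * w)) = e21 * w"
proof -
  have "e21 = e21 * (e12 * e21 + e21 * e12)" by (simp add: e12_e21_plus_e21_e12)
  also have "\<dots> = e21 * (e12 * e21)" by (simp add: distrib_left e21_square flip: mult.assoc)
  finally show "e21 * (e12 * e21) = e21" ..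
  then show "e21 * (e12 * (e21 * w)) = e21 * w" by (metis mult.assoc)
qed

definition e11 :: 'a where "e11 = e12 * e21"

definition corner :: "'a \<Rightarrow> bool" where
  "corner z \<longleftrightarrow> e11 * z = z \<and> z * e11 = z"

lemma corner_e11: "corner e11"
  by (simp add: corner_def e11_def e12_e21_e12 mult.assoc)

lemma corner_closed:
  assumes "corner y" "corner z"
  shows "corner (y * z)" "corner (y + z)" "corner (y - z)"
  using assms by (simp_all add: corner_def algebra_simps) (metis mult.assoc)

lemma corner_uminus: "corner y \<Longrightarrow> corner (- y)"
  by (simp add: corner_def)

lemma corner_zero: "corner 0"
  by (simp add: corner_def)

lemmas corner_intros = corner_e11 corner_zero corner_uminus corner_closed

lemma corner_simps:
  assumes "corner z"
  shows "e11 * z = z" "e11 * (z * w) = z * w" "z * e11 = z" "z * (e11 * w) = z * w"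
    "e12 * z = 0" "e12 * (z * w) = 0" "z * e21 = 0" "z * (e21 * w) = 0"
    "e12 * (e21 * z) = z" "e12 * (e21 * (z * w)) = z * w"
    "z * (e12 * e21) = z" "z * (e12 * (e21 * w)) = z * w"
proof -
  have ez: "e11 * z = z" and ze: "z * e11 = z" using assms by (auto simp: corner_def)
  show "e11 * z = z" "z * e11 = z" by fact+
  show "e11 * (z * w) = z * w" "z * (e11 * w) = z * w" using ez ze by (metis mult.assoc)+
  show e12z: "e12 * z = 0" by (metis ez e11_def e12_square mult.assoc mult_zero_left)
  show ze21: "z * e21 = 0" by (metis ze e11_def e21_square mult.assoc mult_zero_right)
  show "e12 * (z * w) = 0" "z * (e21 * w) = 0" by (metis e12z ze21 mult.assoc mult_zero_left)+
  show "e12 * (e21 * z) = z" "e12 * (e21 * (z * w)) = z * w"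
    "z * (e12 * e21) = z" "z * (e12 * (e21 * w)) = z * w"
    using ez ze unfolding e11_def by (metis mult.assoc)+
qed

(* blocks a b c d is the matrix [[a, b], [c, d]] over the corner ring e11 R e11, whose
   identity is e11; the entries are meant to lie in that corner. *)
definition blocks :: "'a \<Rightarrow> 'a \<Rightarrow> 'a \<Rightarrow> 'a \<Rightarrow> 'a" where
  "blocks a b c d = a + b * e12 + e21 * c + e21 * d * e12"

lemma blocks_add:
  "blocks a b c d + blocks a' b' c' d' = blocks (a + a') (b + b') (c + c') (d + d')"
  by (simp add: blocks_def algebra_simps)

lemma blocks_mult:
  assumes "corner a" "corner b" "corner c" "corner d"
    and "corner a'" "corner b'" "corner c'" "corner d'"
  shows "blocks a b c d * blocks a' b' c' d' =
    blocks (a * a' + b * c') (a * b' + b * d') (c * a' + d * c') (c * b' + d * d')"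
  using corner_simps[OF assms(1)] corner_simps[OF assms(2)] corner_simps[OF assms(3)]
    corner_simps[OF assms(4)] corner_simps[OF assms(5)] corner_simps[OF assms(6)]
    corner_simps[OF assms(7)] corner_simps[OF assms(8)]
  by (simp add: blocks_def algebra_simps)

lemma blocks_one: "blocks e11 0 0 e11 = 1"
  by (simp add: blocks_def e11_def e21_e12_e21 e12_e21_plus_e21_e12 mult.assoc)

lemma blocks_decomposition:
  "x = blocks (e11 * x * e11) (e11 * x * e21) (e12 * x * e11) (e12 * x * e21)"
proof -
  have "x = (e11 + e21 * e12) * x * (e11 + e21 * e12)"
    unfolding e11_def e12_e21_plus_e21_e12 by simp
  then show ?thesis by (simp add: blocks_def algebra_simps)
qed

lemma corner_entries:
  "corner (e11 * x * e11)" "corner (e11 * x * e21)"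
  "corner (e12 * x * e11)" "corner (e12 * x * e21)"
  by (auto simp: corner_def e11_def mult.assoc e12_e21_e12 e21_e12_e21)

lemma idempotent_blocks:
  assumes "corner \<alpha>"
  defines "E \<equiv> blocks \<alpha> e11 (\<alpha> - \<alpha> * \<alpha>) (e11 - \<alpha>)"
  shows "E * E = E"
proof -
  note closed = assms(1) corner_intros
  have "E * E = blocks (\<alpha> * \<alpha> + e11 * (\<alpha> - \<alpha> * \<alpha>)) (\<alpha> * e11 + e11 * (e11 - \<alpha>))
      ((\<alpha> - \<alpha> * \<alpha>) * \<alpha> + (e11 - \<alpha>) * (\<alpha> - \<alpha> * \<alpha>))
      ((\<alpha> - \<alpha> * \<alpha>) * e11 + (e11 - \<alpha>) * (e11 - \<alpha>))"
    unfolding E_def by (intro blocks_mult closed)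
  also have "\<dots> = E"
    unfolding E_def using corner_simps[OF assms(1)] corner_simps[OF corner_e11]
    by (simp add: algebra_simps)
  finally show ?thesis .
qed

lemma invertible_blocks_antidiagonal:
  assumes "corner y"
  shows "invertible (blocks 0 e11 e11 y)"
proof -
  note closed = assms corner_intros
  note simps = corner_simps[OF assms] corner_simps[OF corner_e11]
  have "blocks 0 e11 e11 y * blocks (- y) e11 e11 0 = blocks e11 0 0 e11"
    by (subst blocks_mult; (intro closed)?; simp add: simps)
  moreover have "blocks (- y) e11 e11 0 * blocks 0 e11 e11 y = blocks e11 0 0 e11"
    by (subst blocks_mult; (intro closed)?; simp add: simps)
  ultimately show ?thesis unfolding invertible_def blocks_one by blast
qed

lemma invertible_blocks_unitriangular_product:
  assumes "corner s" "corner t"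
  shows "invertible (blocks e11 s t (e11 + t * s))"
proof -
  note closed = assms corner_intros
  note simps = corner_simps[OF assms(1)] corner_simps[OF assms(2)] corner_simps[OF corner_e11]
  have "blocks e11 s t (e11 + t * s) * blocks (e11 + s * t) (- s) (- t) e11 = blocks e11 0 0 e11"
    by (subst blocks_mult; (intro closed)?; simp add: simps algebra_simps)
  moreover have
    "blocks (e11 + s * t) (- s) (- t) e11 * blocks e11 s t (e11 + t * s) = blocks e11 0 0 e11"
    by (subst blocks_mult; (intro closed)?; simp add: simps algebra_simps)
  ultimately show ?thesis unfolding invertible_def blocks_one by blast
qed

theorem two_clean:
  fixes x :: 'a
  shows "\<exists>E U1 U2. E * E = E \<and> invertible U1 \<and> invertible U2 \<and> x = E + U1 + U2"
proof -
  define a b c d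
    where "a = e11 * x * e11" and "b = e11 * x * e21" and "c = e12 * x * e11" and "d = e12 * x * e21"
  have entries: "corner a" "corner b" "corner c" "corner d"
    unfolding a_def b_def c_def d_def by (rule corner_entries)+
  define \<alpha> s t y
    where "\<alpha> = a - e11" and "s = b - e11 - e11" and "t = c - e11 - \<alpha> + \<alpha> * \<alpha>"
    and "y = d - e11 - e11 + \<alpha> - t * s"
  note closed = entries corner_intros
  have corners: "corner \<alpha>" "corner s" "corner t" "corner y"
    unfolding \<alpha>_def s_def t_def y_def by (intro closed)+
  have "x = blocks a b c d"
    unfolding a_def b_def c_def d_def by (rule blocks_decomposition)
  also have "\<dots> = blocks \<alpha> e11 (\<alpha> - \<alpha> * \<alpha>) (e11 - \<alpha>) + blocks 0 e11 e11 y
      + blocks e11 s t (e11 + t * s)"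
  proof -
    have "a = \<alpha> + 0 + e11" "b = e11 + e11 + s" "c = \<alpha> - \<alpha> * \<alpha> + e11 + t"
      "d = e11 - \<alpha> + y + (e11 + t * s)"
      unfolding \<alpha>_def s_def t_def y_def by (simp_all add: algebra_simps)
    then show ?thesis by (simp only: blocks_add)
  qed
  finally show ?thesis
    using idempotent_blocks[OF corners(1)] invertible_blocks_antidiagonal[OF corners(4)]
      invertible_blocks_unitriangular_product[OF corners(2,3)] by blast
qed

end

lemma B_mats_row_finite: "A \<in> B_mats \<Longrightarrow> finite {k. A i k \<noteq> 0}"
  by (simp add: B_mats_def row_finite_def)

lemma B_mats_column_finite: "A \<in> B_mats \<Longrightarrow> finite {i. A i k \<noteq> 0}"
  by (simp add: B_mats_def column_finite_def)

lemma B_mats_pointwise: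
  fixes f :: "'a::zero \<Rightarrow> 'b::zero \<Rightarrow> 'c::zero"
  assumes "f 0 0 = 0" and A: "A \<in> B_mats" and B: "B \<in> B_mats"
  shows "(\<lambda>i j. f (A i j) (B i j)) \<in> B_mats"
proof -
  have "finite {j. f (A i j) (B i j) \<noteq> 0}" for i
    by (rule finite_subset[of _ "{j. A i j \<noteq> 0} \<union> {j. B i j \<noteq> 0}"])
      (use assms(1) B_mats_row_finite[OF A] B_mats_row_finite[OF B] in auto)
  moreover have "finite {i. f (A i j) (B i j) \<noteq> 0}" for j
    by (rule finite_subset[of _ "{i. A i j \<noteq> 0} \<union> {i. B i j \<noteq> 0}"])
      (use assms(1) B_mats_column_finite[OF A] B_mats_column_finite[OF B] in auto)
  ultimately show ?thesis by (simp add: B_mats_def row_finite_def column_finite_def)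
qed

lemma mat_mul_eq_sum:
  fixes A :: "('a::{ring,monoid_mult}) imat"
  assumes "finite F" "{k. A i k \<noteq> 0} \<subseteq> F"
  shows "mat_mul A B i j = (\<Sum>k\<in>F. A i k * B k j)"
  unfolding mat_mul_def using assms by (intro sum.mono_neutral_left) auto

lemma mat_mul_single_entry_row:
  fixes A :: "('a::{ring,monoid_mult}) imat"
  assumes "\<And>k. A i k \<noteq> 0 \<Longrightarrow> k = l"
  shows "mat_mul A B i j = A i l * B l j"
  using mat_mul_eq_sum[of "{l}" A i B j] assms by auto

lemma mat_mul_nonzero:
  fixes A :: "('a::{ring,monoid_mult}) imat"
  assumes "mat_mul A B i j \<noteq> 0"
  obtains k where "A i k \<noteq> 0" "B k j \<noteq> 0"
proof -
  have "mat_mul A B i j = 0" if "\<forall>k. A i k \<noteq> 0 \<longrightarrow> B k j = 0"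
    unfolding mat_mul_def using that by (intro sum.neutral) auto
  then show ?thesis using assms that by blast
qed

lemma mat_mul_B_mats:
  fixes A :: "('a::{ring,monoid_mult}) imat"
  assumes A: "A \<in> B_mats" and B: "B \<in> B_mats"
  shows "mat_mul A B \<in> B_mats"
proof -
  have "finite {j. mat_mul A B i j \<noteq> 0}" for i
    by (rule finite_subset[of _ "\<Union>k\<in>{k. A i k \<noteq> 0}. {j. B k j \<noteq> 0}"])
      (use B_mats_row_finite[OF A] B_mats_row_finite[OF B] in \<open>auto elim: mat_mul_nonzero\<close>)
  moreover have "finite {i. mat_mul A B i j \<noteq> 0}" for j
    by (rule finite_subset[of _ "\<Union>k\<in>{k. B k j \<noteq> 0}. {i. A i k \<noteq> 0}"])
      (use B_mats_column_finite[OF A] B_mats_column_finite[OF B] in \<open>auto elim: mat_mul_nonzero\<close>)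
  ultimately show ?thesis by (simp add: B_mats_def row_finite_def column_finite_def)
qed

lemma mat_id_B_mats: "(mat_id :: ('a::{zero,one}) imat) \<in> B_mats"
proof -
  have "finite {j. (mat_id :: 'a imat) i j \<noteq> 0}"
    and "finite {j. (mat_id :: 'a imat) j i \<noteq> 0}" for i
    by (rule finite_subset[of _ "{i}"]; auto simp: mat_id_def)+
  then show ?thesis by (simp add: B_mats_def row_finite_def column_finite_def)
qed

lemma B_mats_zero: "(\<lambda>i j. 0) \<in> B_mats"
  by (simp add: B_mats_def row_finite_def column_finite_def)

lemma mat_mul_assoc:
  fixes A :: "('a::{ring,monoid_mult}) imat"
  assumes A: "row_finite A" and B: "row_finite B"
  shows "mat_mul (mat_mul A B) C = mat_mul A (mat_mul B C)"
proof (intro ext)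
  fix i l
  define F where "F = {k. A i k \<noteq> 0}"
  define G where "G = (\<Union>k\<in>F. {j. B k j \<noteq> 0})"
  have "finite F" using A by (simp add: F_def row_finite_def)
  then have "finite G" using B by (simp add: G_def row_finite_def)
  moreover have "{j. mat_mul A B i j \<noteq> 0} \<subseteq> G"
    by (auto simp: G_def F_def elim: mat_mul_nonzero)
  ultimately have "mat_mul (mat_mul A B) C i l = (\<Sum>j\<in>G. mat_mul A B i j * C j l)"
    by (rule mat_mul_eq_sum)
  also have "\<dots> = (\<Sum>j\<in>G. (\<Sum>k\<in>F. A i k * B k j) * C j l)"
    by (simp add: F_def mat_mul_def)
  also have "\<dots> = (\<Sum>k\<in>F. A i k * (\<Sum>j\<in>G. B k j * C j l))"
    by (simp add: sum_distrib_left sum_distrib_right mult.assoc sum.swap[of _ G])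
  also have "\<dots> = (\<Sum>k\<in>F. A i k * mat_mul B C k l)"
    using \<open>finite G\<close> by (intro sum.cong refl arg_cong2[where f="(*)"] mat_mul_eq_sum[symmetric])
      (auto simp: G_def)
  also have "\<dots> = mat_mul A (mat_mul B C) i l"
    by (simp add: F_def mat_mul_def)
  finally show "mat_mul (mat_mul A B) C i l = mat_mul A (mat_mul B C) i l" .
qed

lemma mat_mul_add_right:
  fixes A :: "('a::{ring,monoid_mult}) imat"
  shows "mat_mul A (mat_add B C) = mat_add (mat_mul A B) (mat_mul A C)"
  by (auto simp: mat_mul_def mat_add_def distrib_left sum.distrib)

lemma mat_mul_add_left:
  fixes A :: "('a::{ring,monoid_mult}) imat"
  assumes A: "row_finite A" and B: "row_finite B"
  shows "mat_mul (mat_add A B) C = mat_add (mat_mul A C) (mat_mul B C)"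
proof (intro ext)
  fix i j
  define F where "F = {k. A i k \<noteq> 0} \<union> {k. B i k \<noteq> 0}"
  have "finite F" using A B by (simp add: F_def row_finite_def)
  then have "mat_mul (mat_add A B) C i j = (\<Sum>k\<in>F. A i k * C k j) + (\<Sum>k\<in>F. B i k * C k j)"
    by (subst mat_mul_eq_sum[of F]) (auto simp: F_def mat_add_def distrib_right sum.distrib)
  also have "\<dots> = mat_add (mat_mul A C) (mat_mul B C) i j"
    using \<open>finite F\<close> by (simp add: mat_add_def mat_mul_eq_sum[of F] F_def)
  finally show "mat_mul (mat_add A B) C i j = mat_add (mat_mul A C) (mat_mul B C) i j" .
qed

lemma mat_mul_id_left:
  fixes A :: "('a::{ring,monoid_mult}) imat"
  shows "mat_mul mat_id A = A"
proof (intro ext)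
  fix i j
  show "mat_mul mat_id A i j = A i j"
    by (subst mat_mul_single_entry_row[where l=i]) (auto simp: mat_id_def split: if_splits)
qed

lemma mat_mul_id_right:
  fixes A :: "('a::{ring,monoid_mult}) imat"
  assumes "row_finite A"
  shows "mat_mul A mat_id = A"
proof (intro ext)
  fix i j
  define F where "F = insert j {k. A i k \<noteq> 0}"
  have "finite F" using assms by (simp add: F_def row_finite_def)
  then have "mat_mul A mat_id i j = (\<Sum>k\<in>F. A i k * mat_id k j)"
    by (rule mat_mul_eq_sum) (auto simp: F_def)
  also have "\<dots> = A i j"
    using \<open>finite F\<close> by (simp add: F_def mat_id_def if_distrib cong: if_cong)
  finally show "mat_mul A mat_id i j = A i j" .
qed

typedef (overloaded) ('a::"{ring,monoid_mult}") bmat = "B_mats :: 'a imat set"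
  morphisms Rep_bmat Abs_bmat
  using B_mats_zero by blast

setup_lifting type_definition_bmat

instantiation bmat :: ("{ring,monoid_mult}") "{zero,one,plus,minus,uminus,times}"
begin

lift_definition zero_bmat :: "'a bmat" is "\<lambda>i j. 0"
  by (rule B_mats_zero)

lift_definition one_bmat :: "'a bmat" is mat_id
  by (rule mat_id_B_mats)

lift_definition plus_bmat :: "'a bmat \<Rightarrow> 'a bmat \<Rightarrow> 'a bmat" is mat_add
  unfolding mat_add_def by (rule B_mats_pointwise) simp_all

lift_definition minus_bmat :: "'a bmat \<Rightarrow> 'a bmat \<Rightarrow> 'a bmat" is "\<lambda>A B i j. A i j - B i j"
  by (rule B_mats_pointwise) simp_all

lift_definition uminus_bmat :: "'a bmat \<Rightarrow> 'a bmat" is "\<lambda>A i j. - A i j"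
  by (rule B_mats_pointwise[where f="\<lambda>x y. - x"]) simp_all

lift_definition times_bmat :: "'a bmat \<Rightarrow> 'a bmat \<Rightarrow> 'a bmat" is mat_mul
  by (rule mat_mul_B_mats)

instance ..

end

instance bmat :: ("{ring,monoid_mult}") ring
proof
  fix a b c :: "'a bmat"
  show "a * b * c = a * (b * c)"
    by transfer (simp add: mat_mul_assoc B_mats_def)
  show "(a + b) * c = a * c + b * c"
    by transfer (simp add: mat_mul_add_left B_mats_def)
  show "a * (b + c) = a * b + a * c"
    by transfer (rule mat_mul_add_right)
  show "a + b + c = a + (b + c)"
    by transfer (simp add: mat_add_def add.assoc)
  show "a + b = b + a"
    by transfer (simp add: mat_add_def add.commute)
  show "0 + a = a"
    by transfer (simp add: mat_add_def)
  show "- a + a = 0"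
    by transfer (simp add: mat_add_def)
  show "a - b = a + - b"
    by transfer (simp add: mat_add_def)
qed

instance bmat :: ("{ring,monoid_mult}") monoid_mult
proof
  fix a :: "'a bmat"
  show "1 * a = a"
    by transfer (rule mat_mul_id_left)
  show "a * 1 = a"
    by transfer (simp add: mat_mul_id_right B_mats_def)
qed

definition even_odd_shift :: "('a::{zero,one}) imat" where
  "even_odd_shift = (\<lambda>i j. if even i \<and> j = Suc i then 1 else 0)"

definition odd_even_shift :: "('a::{zero,one}) imat" where
  "odd_even_shift = (\<lambda>i j. if odd i \<and> j = i - 1 then 1 else 0)"

lemma even_odd_shift_B_mats: "(even_odd_shift :: ('a::{zero,one}) imat) \<in> B_mats"
proof -
  have "finite {j. (even_odd_shift :: 'a imat) i j \<noteq> 0}"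
    and "finite {j. (even_odd_shift :: 'a imat) j i \<noteq> 0}" for i
    by (rule finite_subset[of _ "{Suc i}"]; auto simp: even_odd_shift_def)
      (rule finite_subset[of _ "{i - 1}"]; auto simp: even_odd_shift_def)
  then show ?thesis by (simp add: B_mats_def row_finite_def column_finite_def)
qed

lemma odd_even_shift_B_mats: "(odd_even_shift :: ('a::{zero,one}) imat) \<in> B_mats"
proof -
  have "finite {j. (odd_even_shift :: 'a imat) i j \<noteq> 0}"
    and "finite {j. (odd_even_shift :: 'a imat) j i \<noteq> 0}" for i
    by (rule finite_subset[of _ "{i - 1}"]; auto simp: odd_even_shift_def)
      (rule finite_subset[of _ "{Suc i}"]; auto simp: odd_even_shift_def)
  then show ?thesis by (simp add: B_mats_def row_finite_def column_finite_def)
qed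

lemma mat_mul_even_odd_shift:
  "mat_mul even_odd_shift A i j = (if even i then A (Suc i) j else (0::'a::{ring,monoid_mult}))"
  by (subst mat_mul_single_entry_row[where l="Suc i"]) (auto simp: even_odd_shift_def split: if_splits)

lemma mat_mul_odd_even_shift:
  "mat_mul odd_even_shift A i j = (if odd i then A (i - 1) j else (0::'a::{ring,monoid_mult}))"
  by (subst mat_mul_single_entry_row[where l="i - 1"]) (auto simp: odd_even_shift_def split: if_splits)

lift_definition e12_bmat :: "('a::{ring,monoid_mult}) bmat" is even_odd_shift
  by (rule even_odd_shift_B_mats)

lift_definition e21_bmat :: "('a::{ring,monoid_mult}) bmat" is odd_even_shift
  by (rule odd_even_shift_B_mats)

lemma matrix_units_bmat: "matrix_units e12_bmat e21_bmat"
proof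
  show "e12_bmat * e12_bmat = 0"
    by transfer (simp add: fun_eq_iff mat_mul_even_odd_shift, simp add: even_odd_shift_def)
  show "e21_bmat * e21_bmat = 0"
    by transfer (simp add: fun_eq_iff mat_mul_odd_even_shift, simp add: odd_even_shift_def)
  show "e12_bmat * e21_bmat + e21_bmat * e12_bmat = 1"
    by transfer (simp add: fun_eq_iff mat_add_def mat_mul_even_odd_shift mat_mul_odd_even_shift,
        auto simp: even_odd_shift_def odd_even_shift_def mat_id_def)
qed

lemma B_idempotent_Rep_bmat: "E * E = E \<Longrightarrow> B_idempotent (Rep_bmat E)"
  unfolding B_idempotent_def by transfer simp

lemma B_unit_Rep_bmat: "invertible U \<Longrightarrow> B_unit (Rep_bmat U)"
  unfolding invertible_def B_unit_def by transfer blast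

theorem theorem8:
  fixes A :: "('a::{ring,monoid_mult}) imat"
  assumes "A \<in> B_mats"
  shows "\<exists>E U1 U2. B_idempotent E \<and> B_unit U1 \<and> B_unit U2 \<and>
           A = mat_add E (mat_add U1 U2)"
proof -
  obtain E U1 U2 :: "'a bmat" where "E * E = E" "invertible U1" "invertible U2"
    and "Abs_bmat A = E + U1 + U2"
    using matrix_units.two_clean[OF matrix_units_bmat] by blast
  moreover have "A = Rep_bmat (Abs_bmat A)"
    using assms by (simp add: Abs_bmat_inverse)
  ultimately show ?thesis
    by (metis B_idempotent_Rep_bmat B_unit_Rep_bmat plus_bmat.rep_eq add.assoc)
qed

end
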